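(* Consider the problem of minimizing $g(\mathbf{x},\mathbf{y})+f(\mathbf{x})+h(\mathbf{y})$ subject to $\mathbf{A}\mathbf{x}+\mathbf{B}\mathbf{y}=\mathbf{0}$, under the standing assumptions (i)–(iv) below, and let $\{(\mathbf{x}^k,\mathbf{y}^k,\boldsymbol{\gamma}^k)\}_{k\ge 0}$ be generated by the two-block linearized ADMM described below. Let $L_{\mathbf{A}}$ be the largest eigenvalue of $\mathbf{A}^{\rm T}\mathbf{A}$, $\lambda_{\mathbf{B}^{\rm T}\mathbf{B}}$ the smallest eigenvalue of $\mathbf{B}^{\rm T}\mathbf{B}$, and $L_w=L_g+L_h$. Suppose the parameters satisfy $$L_x\ge L_g+\beta L_{\mathbf{A}}+6L_w^2+1,\qquad L_y\ge L_w+L_w^2+3,\qquad C_m=\tfrac{L_y+L_w^2}{2},$$ $$\beta\ge\max\left\{\frac{L_w+L_y+2}{\lambda_{\mathbf{B}^{\rm T}\mathbf{B}}},\ \frac{3(L_w^2+L_y^2)}{\lambda_{\mathbf{B}^{\rm T}\mathbf{B}}C_m},\ \frac{3L_y^2}{\lambda_{\mathbf{B}^{\rm T}\mathbf{B}}}\right\}.$$ Then the sequence $\{L_\beta(\mathbf{x}^k,\mathbf{y}^k,\boldsymbol{\gamma}^k)\}$ is convergent, and $\|\mathbf{y}^{k+1}-\mathbf{y}^k\|$, $\|\mathbf{x}^{k+1}-\mathbf{x}^k\|$ and $\|\boldsymbol{\gamma}^{k+1}-\boldsymbol{\gamma}^k\|$ converge to zero as $k\to\infty$.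
   Context: Variables $\mathbf{x}\in\mathbb{R}^p$, $\mathbf{y}\in\mathbb{R}^q$; given matrices $\mathbf{A}\in\mathbb{R}^{n\times p}$, $\mathbf{B}\in\mathbb{R}^{n\times q}$. The function $f$ may be nonconvex and nonsmooth; $g,h$ are differentiable, possibly nonconvex. A function $s$ is $L$-Lipschitz differentiable if $\|\nabla s(\mathbf{u})-\nabla s(\mathbf{u}')\|_2\le L\|\mathbf{u}-\mathbf{u}'\|_2$ for all $\mathbf{u},\mathbf{u}'$. Standing assumptions: (i) $h$ is $L_h$-Lipschitz differentiable; (ii) $g$ is $L_g$-Lipschitz differentiable (jointly in $(\mathbf{x},\mathbf{y})$); (iii) $g(\mathbf{x},\mathbf{y})+f(\mathbf{x})+h(\mathbf{y})$ is lower bounded on the feasible set $\{(\mathbf{x},\mathbf{y}):\mathbf{A}\mathbf{x}+\mathbf{B}\mathbf{y}=\mathbf{0}\}$ and coercive with respect to $\mathbf{y}$ over it, i.e. for every sequence $(\mathbf{x}^k,\mathbf{y}^k)$ in the feasible set with $\|\mathbf{y}^k\|\to\infty$, the function value tends to $+\infty$; (iv) $\mathbf{B}$ has full column rank and $\mathrm{Im}(\mathbf{A})\subset\mathrm{Im}(\mathbf{B})$. Augmented Lagrangian: $L_\beta(\mathbf{x},\mathbf{y},\boldsymbol{\gamma})=g(\mathbf{x},\mathbf{y})+f(\mathbf{x})+h(\mathbf{y})+\langle\boldsymbol{\gamma},\mathbf{A}\mathbf{x}+\mathbf{B}\mathbf{y}\rangle+\frac{\beta}{2}\|\mathbf{A}\mathbf{x}+\mathbf{B}\mathbf{y}\|_2^2$.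 Algorithm (parameters $L_x,L_y,\beta>0$, arbitrary initial $\mathbf{x}^0,\mathbf{y}^0,\boldsymbol{\gamma}^0$): for $k\ge0$, $\mathbf{x}^{k+1}\in\arg\min_{\mathbf{x}}\bar f^k(\mathbf{x})$, $\mathbf{y}^{k+1}=\arg\min_{\mathbf{y}}\bar h^k(\mathbf{y})$, $\boldsymbol{\gamma}^{k+1}=\boldsymbol{\gamma}^k+\beta(\mathbf{A}\mathbf{x}^{k+1}+\mathbf{B}\mathbf{y}^{k+1})$, where $\bar f^k(\mathbf{x})=f(\mathbf{x})+\langle\boldsymbol{\gamma}^k,\mathbf{A}\mathbf{x}\rangle+\frac{L_x}{2}\|\mathbf{x}-\mathbf{x}^k\|^2+\langle\mathbf{x}-\mathbf{x}^k,\nabla_{\mathbf{x}}g(\mathbf{x}^k,\mathbf{y}^k)+\beta\mathbf{A}^{\rm T}(\mathbf{A}\mathbf{x}^k+\mathbf{B}\mathbf{y}^k)\rangle$ and $\bar h^k(\mathbf{y})=\langle\boldsymbol{\gamma}^k,\mathbf{B}\mathbf{y}\rangle+\frac{L_y}{2}\|\mathbf{y}-\mathbf{y}^k\|^2+\frac{\beta}{2}\|\mathbf{A}\mathbf{x}^{k+1}+\mathbf{B}\mathbf{y}\|^2+\langle\mathbf{y}-\mathbf{y}^k,\nabla_{\mathbf{y}}g(\mathbf{x}^{k+1},\mathbf{y}^k)+\nabla h(\mathbf{y}^k)\rangle$ (the minimizer of $\bar f^k$ is assumed to exist at each step). *)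

theory Defs
  imports "HOL-Analysis.Analysis"
begin

definition is_eigenvalue :: "real^'n^'n \<Rightarrow> real \<Rightarrow> bool" where
  "is_eigenvalue M mu \<longleftrightarrow> (\<exists>v. v \<noteq> 0 \<and> M *v v = mu *s v)"

definition aug_lagr ::
  "((real^'p) \<times> (real^'q) \<Rightarrow> real) \<Rightarrow> (real^'p \<Rightarrow> real) \<Rightarrow> (real^'q \<Rightarrow> real)
   \<Rightarrow> real^'p^'n \<Rightarrow> real^'q^'n \<Rightarrow> real
   \<Rightarrow> real^'p \<Rightarrow> real^'q \<Rightarrow> real^'n \<Rightarrow> real" where
  "aug_lagr g f h A B beta x y gam =
     g (x, y) + f x + h y + gam \<bullet> (A *v x + B *v y)
     + beta / 2 * (norm (A *v x + B *v y))\<^sup>2"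

text \<open>Linearized x-subproblem objective bar f^k (with x^k = xk, y^k = yk, gamma^k = gk,
  Dgx = partial gradient of g in x at (xk,yk)).\<close>
definition fbar ::
  "(real^'p \<Rightarrow> real) \<Rightarrow> real^'p^'n \<Rightarrow> real^'q^'n \<Rightarrow> real \<Rightarrow> real
   \<Rightarrow> real^'p \<Rightarrow> real^'q \<Rightarrow> real^'n \<Rightarrow> real^'p \<Rightarrow> real^'p \<Rightarrow> real" where
  "fbar f A B beta Lx xk yk gk Dgx x =
     f x + gk \<bullet> (A *v x) + Lx / 2 * (norm (x - xk))\<^sup>2
     + (x - xk) \<bullet> (Dgx + beta *s (transpose A *v (A *v xk + B *v yk)))"

text \<open>Linearized y-subproblem objective bar h^k (x1 = x^{k+1}; Dgy = partial gradient
  of g in y at (x^{k+1}, y^k); Dhk = gradient of h at y^k).\<close>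
definition hbar ::
  "real^'p^'n \<Rightarrow> real^'q^'n \<Rightarrow> real \<Rightarrow> real
   \<Rightarrow> real^'p \<Rightarrow> real^'q \<Rightarrow> real^'n \<Rightarrow> real^'q \<Rightarrow> real^'q \<Rightarrow> real^'q \<Rightarrow> real" where
  "hbar A B beta Ly x1 yk gk Dgy Dhk y =
     gk \<bullet> (B *v y) + Ly / 2 * (norm (y - yk))\<^sup>2
     + beta / 2 * (norm (A *v x1 + B *v y))\<^sup>2
     + (y - yk) \<bullet> (Dgy + Dhk)"

end

theory Submission
  imports Defs
begin

text \<open>The augmented Lagrangian, corrected by \<open>C\<^sub>m |y\<^sup>k\<^sup>+\<^sup>1 - y\<^sup>k|\<^sup>2\<close>, is a Lyapunov function
  for the iteration. The x-step decreases \<open>L\<^sub>\<beta>\<close> by a multiple of \<open>|\<Delta>x|\<^sup>2\<close> (descent lemma for \<open>g\<close>,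
  proximal term, \<open>|A d|\<^sup>2 \<le> L\<^sub>A |d|\<^sup>2\<close>), the y-step by a multiple of \<open>|\<Delta>y|\<^sup>2\<close> (the y-subproblem is
  strongly convex with modulus \<open>L\<^sub>y + \<beta> \<lambda>\<close>), while the dual step increases it by \<open>|\<Delta>\<gamma>|\<^sup>2 / \<beta>\<close>.
  Because \<open>Im A \<subseteq> Im B\<close>, \<open>\<Delta>\<gamma>\<close> lies in the range of \<open>B\<close>, so \<open>\<lambda> |\<Delta>\<gamma>|\<^sup>2 \<le> |B\<^sup>T \<Delta>\<gamma>|\<^sup>2\<close>, and the
  first-order condition of the y-subproblem expresses \<open>B\<^sup>T \<gamma>\<^sup>k\<^sup>+\<^sup>1\<close> through \<open>\<Delta>y\<close> and the gradients
  of \<open>g\<close> and \<open>h\<close>. Hence the dual increase is \<open>O(|\<Delta>x|\<^sup>2 + |\<Delta>y|\<^sup>2)\<close> and is absorbed once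
  \<open>\<beta>\<close> is large. The same first-order condition bounds the Lyapunov sequence from below by
  the objective value at a feasible point, so it converges, and its decrements force
  \<open>\<Delta>x, \<Delta>y, \<Delta>\<gamma> \<rightarrow> 0\<close>.\<close>

lemma lipschitz_gradient_taylor_bound:
  fixes g :: "'a::real_inner \<Rightarrow> real"
  assumes grad: "\<And>u. (g has_derivative (\<lambda>d. G u \<bullet> d)) (at u)"
    and lip: "\<And>u u'. norm (G u - G u') \<le> L * norm (u - u')" and "L \<ge> 0"
  shows "\<bar>g (u + d) - g u - G u \<bullet> d\<bar> \<le> L * (norm d)\<^sup>2"
proof -
  define \<phi> where "\<phi> = (\<lambda>t::real. g (u + t *\<^sub>R d))"
  have der: "(\<phi> has_derivative (\<lambda>s. G (u + t *\<^sub>R d) \<bullet> (s *\<^sub>R d))) (at t within {0..1})" for t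
  proof -
    have "((\<lambda>t. u + t *\<^sub>R d) has_derivative (\<lambda>s. s *\<^sub>R d)) (at t within {0..1})"
      by (auto intro!: derivative_eq_intros)
    from diff_chain_within[OF this has_derivative_at_withinI[OF grad]] show ?thesis
      by (simp add: \<phi>_def o_def)
  qed
  obtain t where t: "t \<in> {0..1}" and mvt: "\<phi> 1 - \<phi> 0 = G (u + t *\<^sub>R d) \<bullet> ((1 - 0) *\<^sub>R d)"
    using mvt_very_simple[of 0 1 \<phi>, OF _ der] by auto
  have "\<bar>(G (u + t *\<^sub>R d) - G u) \<bullet> d\<bar> \<le> norm (G (u + t *\<^sub>R d) - G u) * norm d"
    by (rule Cauchy_Schwarz_ineq2)
  also have "\<dots> \<le> L * norm (t *\<^sub>R d) * norm d"
    using lip[of "u + t *\<^sub>R d" u] by (simp add: mult_right_mono)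
  also have "\<dots> \<le> L * (norm d)\<^sup>2"
    using t \<open>L \<ge> 0\<close>
    by (simp add: power2_eq_square mult_left_le_one_le mult_le_cancel_right1 mult.assoc mult_left_mono)
  finally show ?thesis
    using mvt by (simp add: \<phi>_def inner_diff_left)
qed

lemma quadratic_nonneg_imp_linear_coeff_eq_0:
  fixes a b :: real
  assumes nonneg: "\<And>t. 0 \<le> t * a + t\<^sup>2 * b"
  shows "a = 0"
proof (rule ccontr)
  assume "a \<noteq> 0"
  define q where "q = \<bar>b\<bar> + 1"
  have q: "q > 0" "\<bar>b\<bar> < q" by (auto simp: q_def)
  define t where "t = - a / q"
  have "t\<^sup>2 * b \<le> t\<^sup>2 * \<bar>b\<bar>" by (simp add: mult_left_mono)
  also have "\<dots> < t\<^sup>2 * q" using \<open>a \<noteq> 0\<close> q by (simp add: t_def)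
  also have "t\<^sup>2 * q = a\<^sup>2 / q" using q by (simp add: t_def power2_eq_square field_simps)
  finally have "t * a + t\<^sup>2 * b < 0" using q by (simp add: t_def power2_eq_square field_simps)
  with nonneg[of t] show False by simp
qed

lemma quadratic_form_nonneg:
  fixes a b c s t :: real
  assumes "c > 0" and "b\<^sup>2 \<le> 4 * a * c"
  shows "0 \<le> a * s\<^sup>2 - b * s * t + c * t\<^sup>2"
proof -
  have "4 * c * (a * s\<^sup>2 - b * s * t + c * t\<^sup>2) = (4 * a * c - b\<^sup>2) * s\<^sup>2 + (b * s - 2 * c * t)\<^sup>2"
    by (simp add: power2_eq_square algebra_simps)
  also have "\<dots> \<ge> 0" using assms by simp
  finally show ?thesis using \<open>c > 0\<close> by (simp add: zero_le_mult_iff)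
qed

lemma power2_sum3_le:
  fixes a b c :: real
  shows "(a + b + c)\<^sup>2 \<le> 3 * (a\<^sup>2 + b\<^sup>2 + c\<^sup>2)"
proof -
  have "3 * (a\<^sup>2 + b\<^sup>2 + c\<^sup>2) - (a + b + c)\<^sup>2 = (a - b)\<^sup>2 + (b - c)\<^sup>2 + (a - c)\<^sup>2"
    by (simp add: power2_eq_square algebra_simps)
  then show ?thesis by (smt (verit) zero_le_power2)
qed

lemma norm_add_power2:
  fixes a b :: "'a::real_inner"
  shows "(norm (a + b))\<^sup>2 = (norm a)\<^sup>2 + 2 * (a \<bullet> b) + (norm b)\<^sup>2"
  unfolding power2_norm_eq_inner by (simp add: inner_add_left inner_add_right inner_commute)

lemma norm_snd_diff_le:
  fixes p p' :: "'a::real_normed_vector \<times> 'b::real_normed_vector"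
  shows "norm (snd p - snd p') \<le> norm (p - p')"
proof -
  have "(fst (p - p'), snd (p - p')) = p - p'" by (rule prod.collapse)
  then have "norm (snd (p - p')) \<le> norm (p - p')" by (metis norm_snd_le)
  then show ?thesis by simp
qed

lemma decrement_dominated_tendsto_0:
  fixes a \<Phi> :: "nat \<Rightarrow> real"
  assumes "convergent \<Phi>" and "\<And>k. 0 \<le> a (Suc k)" and "\<And>k. a (Suc k) \<le> C * \<Phi> k - C * \<Phi> (Suc k)"
  shows "a \<longlonglongrightarrow> 0"
proof -
  obtain l where lim: "\<Phi> \<longlonglongrightarrow> l" using \<open>convergent \<Phi>\<close> by (auto simp: convergent_def)
  have "(\<lambda>k. C * \<Phi> k - C * \<Phi> (Suc k)) \<longlonglongrightarrow> 0"
    using tendsto_diff[OF tendsto_mult_left[OF lim, where c = C]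
        tendsto_mult_left[OF LIMSEQ_Suc[OF lim], where c = C]] by simp
  moreover have "\<forall>\<^sub>F k in sequentially. norm (a (Suc k)) \<le> C * \<Phi> k - C * \<Phi> (Suc k)"
    using assms(2,3) by (simp add: always_eventually)
  ultimately have "(\<lambda>k. a (Suc k)) \<longlonglongrightarrow> 0"
    by (rule Lim_null_comparison[rotated])
  then show ?thesis by (rule LIMSEQ_imp_Suc)
qed

section \<open>Eigenvalue bounds for \<open>A\<^sup>T A\<close> and \<open>B\<^sup>T B\<close>\<close>

lemma inner_transpose_mult_vector:
  fixes A :: "real^'m^'n"
  shows "(transpose A *v u) \<bullet> v = u \<bullet> (A *v v)"
  by (simp add: dot_lmul_matrix)

lemma inner_symmetric_matrix:
  fixes M :: "real^'n^'n"
  assumes "transpose M = M"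
  shows "x \<bullet> (M *v y) = (M *v x) \<bullet> y"
  by (metis assms inner_transpose_mult_vector)

lemma inner_transpose_mult_self:
  fixes A :: "real^'m^'n"
  shows "v \<bullet> ((transpose A ** A) *v v) = (norm (A *v v))\<^sup>2"
  by (simp add: power2_norm_eq_inner inner_transpose_mult_vector[symmetric] inner_commute
      matrix_vector_mul_assoc[symmetric])

lemma rayleigh_minimizer_is_eigenvector:
  fixes M :: "real^'n^'n"
  assumes sym: "transpose M = M" and unit: "norm v0 = 1"
    and min: "\<And>v. (v0 \<bullet> (M *v v0)) * (norm v)\<^sup>2 \<le> v \<bullet> (M *v v)"
  shows "M *v v0 = (v0 \<bullet> (M *v v0)) *s v0"
proof -
  define \<mu> where "\<mu> = v0 \<bullet> (M *v v0)"
  define w where "w = M *v v0 - \<mu> *\<^sub>R v0"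
  have "0 \<le> t * (2 * (norm w)\<^sup>2) + t\<^sup>2 * (w \<bullet> (M *v w) - \<mu> * (norm w)\<^sup>2)" for t
  proof -
    have "(v0 + t *\<^sub>R w) \<bullet> (M *v (v0 + t *\<^sub>R w))
        = \<mu> + 2 * t * (w \<bullet> (M *v v0)) + t\<^sup>2 * (w \<bullet> (M *v w))"
      using inner_symmetric_matrix[OF sym, of v0 w]
      by (simp add: \<mu>_def algebra_simps inner_add_left inner_add_right power2_eq_square inner_commute)
    moreover have "(norm (v0 + t *\<^sub>R w))\<^sup>2 = 1 + 2 * t * (v0 \<bullet> w) + t\<^sup>2 * (norm w)\<^sup>2"
      using unit by (simp add: norm_add_power2 power_mult_distrib)
    moreover have "w \<bullet> (M *v v0) = (norm w)\<^sup>2 + \<mu> * (v0 \<bullet> w)"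
      using unit power2_norm_eq_inner[of v0]
      by (simp add: w_def power2_norm_eq_inner inner_diff_left inner_diff_right inner_commute algebra_simps)
    ultimately show ?thesis
      using min[of "v0 + t *\<^sub>R w"] by (simp add: \<mu>_def algebra_simps power2_eq_square)
  qed
  then have "w = 0" using quadratic_nonneg_imp_linear_coeff_eq_0 by fastforce
  then show ?thesis by (simp add: w_def \<mu>_def scalar_mult_eq_scaleR)
qed

lemma symmetric_matrix_min_eigenvalue:
  fixes M :: "real^'n^'n"
  assumes sym: "transpose M = M"
  obtains \<mu> where "is_eigenvalue M \<mu>" and "\<And>v. \<mu> * (norm v)\<^sup>2 \<le> v \<bullet> (M *v v)"
proof -
  let ?q = "\<lambda>v. v \<bullet> (M *v v)"
  have "continuous_on (sphere 0 1) ?q"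
    by (intro continuous_intros matrix_vector_mult_linear_continuous_on[THEN continuous_on_compose2[of UNIV]])
      auto
  moreover have "sphere (0::real^'n) 1 \<noteq> {}"
    by (metis norm_axis_1 mem_sphere_0 empty_iff)
  ultimately obtain v0 where "v0 \<in> sphere 0 1" and "\<forall>u \<in> sphere 0 1. ?q v0 \<le> ?q u"
    using continuous_attains_inf[OF compact_sphere] by blast
  then have v0: "norm v0 = 1" and v0_min: "\<And>u. norm u = 1 \<Longrightarrow> ?q v0 \<le> ?q u" by simp_all
  have min: "?q v0 * (norm v)\<^sup>2 \<le> ?q v" for v
  proof (cases "v = 0")
    case False
    have "?q v0 \<le> ?q ((1 / norm v) *\<^sub>R v)" using False by (intro v0_min) simp
    also have "\<dots> = ?q v / (norm v)\<^sup>2"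
      by (simp add: matrix_vector_mult_scaleR power2_eq_square)
    finally show ?thesis using False by (simp add: field_simps)
  qed simp
  have "v0 \<noteq> 0" using v0 by auto
  then have "is_eigenvalue M (?q v0)"
    unfolding is_eigenvalue_def using rayleigh_minimizer_is_eigenvector[OF sym v0 min] by blast
  then show thesis using min by (rule that)
qed

lemma symmetric_transpose_mult_self: "transpose (transpose A ** A) = transpose A ** (A::real^'m^'n)"
  by (simp add: matrix_transpose_mul)

lemma min_eigenvalue_le_norm_mult:
  fixes B :: "real^'m^'n"
  assumes "\<And>\<mu>. is_eigenvalue (transpose B ** B) \<mu> \<Longrightarrow> \<sigma> \<le> \<mu>"
  shows "\<sigma> * (norm v)\<^sup>2 \<le> (norm (B *v v))\<^sup>2"
proof -
  obtain \<mu> where "is_eigenvalue (transpose B ** B) \<mu>"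
    and \<mu>: "\<And>v. \<mu> * (norm v)\<^sup>2 \<le> v \<bullet> ((transpose B ** B) *v v)"
    using symmetric_matrix_min_eigenvalue[OF symmetric_transpose_mult_self] by blast
  then have "\<sigma> * (norm v)\<^sup>2 \<le> \<mu> * (norm v)\<^sup>2" using assms by (simp add: mult_right_mono)
  also have "\<dots> \<le> (norm (B *v v))\<^sup>2" using \<mu>[of v] by (simp add: inner_transpose_mult_self)
  finally show ?thesis .
qed

lemma norm_mult_le_max_eigenvalue:
  fixes A :: "real^'m^'n"
  assumes max: "\<And>\<mu>. is_eigenvalue (transpose A ** A) \<mu> \<Longrightarrow> \<mu> \<le> \<Lambda>"
  shows "(norm (A *v v))\<^sup>2 \<le> \<Lambda> * (norm v)\<^sup>2"
proof -
  let ?M = "transpose A ** A"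
  have neg: "(- ?M) *v u = - (?M *v u)" for u
    by (simp add: matrix_vector_mult_def vec_eq_iff sum_negf)
  have "transpose (- ?M) = - ?M"
    using symmetric_transpose_mult_self[of A] by (simp add: transpose_def vec_eq_iff)
  then obtain \<mu> where "is_eigenvalue (- ?M) \<mu>" and \<mu>: "\<And>u. \<mu> * (norm u)\<^sup>2 \<le> u \<bullet> ((- ?M) *v u)"
    using symmetric_matrix_min_eigenvalue by blast
  then have "is_eigenvalue ?M (- \<mu>)"
    unfolding is_eigenvalue_def neg by (metis minus_equation_iff scalar_mult_eq_scaleR scaleR_minus_left)
  then have "- \<mu> \<le> \<Lambda>" by (rule max)
  have "(norm (A *v v))\<^sup>2 \<le> - \<mu> * (norm v)\<^sup>2"
    using \<mu>[of v] by (simp add: neg inner_transpose_mult_self)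
  also have "\<dots> \<le> \<Lambda> * (norm v)\<^sup>2"
    using mult_right_mono[OF \<open>- \<mu> \<le> \<Lambda>\<close> zero_le_power2[of "norm v"]] by simp
  finally show ?thesis .
qed

lemma full_rank_eigenvalue_pos:
  fixes B :: "real^'m^'n"
  assumes "rank B = CARD('m)" and "is_eigenvalue (transpose B ** B) \<sigma>"
  shows "\<sigma> > 0"
proof -
  obtain v where v: "v \<noteq> 0" "(transpose B ** B) *v v = \<sigma> *s v"
    using assms(2) unfolding is_eigenvalue_def by blast
  have "B *v v \<noteq> 0"
    using full_rank_injective[of B] assms(1) v(1) by (metis injD matrix_vector_mult_0_right)
  then have "0 < (norm (B *v v))\<^sup>2" by simp
  also have "\<dots> = \<sigma> * (norm v)\<^sup>2"
    using inner_transpose_mult_self[of v B] v(2) by (simp add: scalar_mult_eq_scaleR power2_norm_eq_inner)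
  finally show ?thesis using v(1) by (simp add: zero_less_mult_iff)
qed

text \<open>On the range of B, the transpose is bounded below as well: for w = B u,
  \<open>\<sigma> |w|\<^sup>2 |u|\<^sup>2 \<le> |w|\<^sup>4 = (u \<bullet> B\<^sup>T w)\<^sup>2 \<le> |u|\<^sup>2 |B\<^sup>T w|\<^sup>2\<close>.\<close>
lemma min_eigenvalue_le_norm_transpose_mult:
  fixes B :: "real^'m^'n"
  assumes lower: "\<And>v. \<sigma> * (norm v)\<^sup>2 \<le> (norm (B *v v))\<^sup>2"
  shows "\<sigma> * (norm (B *v u))\<^sup>2 \<le> (norm (transpose B *v (B *v u)))\<^sup>2"
proof (cases "u = 0")
  case False
  define w where "w = B *v u"
  have "(norm w)\<^sup>2 = u \<bullet> (transpose B *v w)"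
    by (simp add: w_def power2_norm_eq_inner inner_transpose_mult_vector[symmetric] inner_commute)
  then have cs: "(norm w)\<^sup>2 \<le> norm u * norm (transpose B *v w)"
    using Cauchy_Schwarz_ineq2[of u "transpose B *v w"] by linarith
  have "\<sigma> * (norm w)\<^sup>2 * (norm u)\<^sup>2 \<le> (norm w)\<^sup>2 * (norm w)\<^sup>2"
    using mult_right_mono[OF lower[of u] zero_le_power2[of "norm w"]] by (simp add: w_def mult_ac)
  also have "\<dots> \<le> (norm u * norm (transpose B *v w))\<^sup>2"
    using cs by (simp add: power2_eq_square mult_mono)
  finally have "\<sigma> * (norm w)\<^sup>2 * (norm u)\<^sup>2 \<le> (norm (transpose B *v w))\<^sup>2 * (norm u)\<^sup>2"
    by (simp add: power_mult_distrib mult.commute)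
  then show ?thesis using False by (simp add: w_def)
qed simp

section \<open>One step of the linearized ADMM\<close>

lemma aug_lagr_x_update_eq:
  "aug_lagr g f h A B beta x1 y gam - aug_lagr g f h A B beta x0 y gam
   = fbar f A B beta Lx x0 y gam Gx x1 - fbar f A B beta Lx x0 y gam Gx x0
     + (g (x1, y) - g (x0, y) - Gx \<bullet> (x1 - x0))
     - Lx / 2 * (norm (x1 - x0))\<^sup>2 + beta / 2 * (norm (A *v (x1 - x0)))\<^sup>2"
proof -
  define d where "d = x1 - x0"
  define r where "r = A *v x0 + B *v y"
  have res: "A *v x1 + B *v y = r + A *v d" by (simp add: d_def r_def algebra_simps)
  have "d \<bullet> (transpose A *v r) = r \<bullet> (A *v d)"
    by (simp add: dot_lmul_matrix inner_commute[of d])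
  moreover have "gam \<bullet> (A *v x1) = gam \<bullet> (A *v x0) + gam \<bullet> (A *v d)"
    by (simp add: d_def algebra_simps inner_diff_right)
  moreover have "Gx \<bullet> d = d \<bullet> Gx" by (rule inner_commute)
  ultimately show ?thesis
    unfolding aug_lagr_def fbar_def res r_def[symmetric] d_def[symmetric] norm_add_power2
    by (simp add: inner_add_right scalar_mult_eq_scaleR algebra_simps del: transpose_matrix_vector)
qed

lemma aug_lagr_x_update_decrease:
  assumes min: "fbar f A B beta Lx x0 y gam Gx x1 \<le> fbar f A B beta Lx x0 y gam Gx x0"
    and taylor: "g (x1, y) - g (x0, y) - Gx \<bullet> (x1 - x0) \<le> Lg * (norm (x1 - x0))\<^sup>2"
    and A_bound: "(norm (A *v (x1 - x0)))\<^sup>2 \<le> LA * (norm (x1 - x0))\<^sup>2" and "beta \<ge> 0"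
  shows "aug_lagr g f h A B beta x1 y gam
    \<le> aug_lagr g f h A B beta x0 y gam - (Lx / 2 - Lg - beta * LA / 2) * (norm (x1 - x0))\<^sup>2"
proof -
  have "beta / 2 * (norm (A *v (x1 - x0)))\<^sup>2 \<le> beta * LA / 2 * (norm (x1 - x0))\<^sup>2"
    using mult_left_mono[OF A_bound, of "beta / 2"] \<open>beta \<ge> 0\<close> by simp
  then show ?thesis
    using aug_lagr_x_update_eq[of g f h A B beta x1 y gam x0 Lx Gx] min taylor
    by (simp add: algebra_simps)
qed

lemma hbar_expansion:
  "hbar A B beta Ly x1 y0 gam Dgy Dhk (y1 + v) = hbar A B beta Ly x1 y0 gam Dgy Dhk y1
     + (transpose B *v (gam + beta *s (A *v x1 + B *v y1)) + Ly *\<^sub>R (y1 - y0) + (Dgy + Dhk)) \<bullet> v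
     + Ly / 2 * (norm v)\<^sup>2 + beta / 2 * (norm (B *v v))\<^sup>2"
proof -
  define r where "r = A *v x1 + B *v y1"
  define G where "G = Dgy + Dhk"
  have lin: "gam \<bullet> (B *v (y1 + v)) = gam \<bullet> (B *v y1) + (transpose B *v gam) \<bullet> v"
    by (simp add: matrix_vector_right_distrib inner_add_right dot_lmul_matrix)
  have "y1 + v - y0 = (y1 - y0) + v" by simp
  then have prox: "(norm (y1 + v - y0))\<^sup>2 = (norm (y1 - y0))\<^sup>2 + 2 * ((y1 - y0) \<bullet> v) + (norm v)\<^sup>2"
    by (simp only: norm_add_power2)
  have "A *v x1 + B *v (y1 + v) = r + B *v v" by (simp add: r_def algebra_simps)
  then have penalty: "(norm (A *v x1 + B *v (y1 + v)))\<^sup>2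
      = (norm r)\<^sup>2 + 2 * ((transpose B *v r) \<bullet> v) + (norm (B *v v))\<^sup>2"
    by (simp add: norm_add_power2 dot_lmul_matrix)
  have grad: "(y1 + v - y0) \<bullet> G = (y1 - y0) \<bullet> G + v \<bullet> G"
    by (simp add: algebra_simps inner_add_left inner_diff_left)
  have coeff: "(transpose B *v (gam + beta *s r) + Ly *\<^sub>R (y1 - y0) + G) \<bullet> v
      = (transpose B *v gam) \<bullet> v + beta * ((transpose B *v r) \<bullet> v) + Ly * ((y1 - y0) \<bullet> v) + G \<bullet> v"
    by (simp add: matrix_vector_right_distrib scalar_mult_eq_scaleR matrix_vector_mult_scaleR
        inner_add_left del: transpose_matrix_vector)
  show ?thesis
    unfolding hbar_def r_def[symmetric] G_def[symmetric] lin prox penalty grad coeff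
    by (simp add: algebra_simps inner_commute)
qed

text \<open>By the expansion above, minimality of \<open>hbar\<close> along the ray \<open>y1 + t D\<close> forces the
  linear coefficient \<open>|D|\<^sup>2\<close> to vanish.\<close>
lemma hbar_argmin_optimality:
  assumes min: "\<And>y. hbar A B beta Ly x1 y0 gam Dgy Dhk y1 \<le> hbar A B beta Ly x1 y0 gam Dgy Dhk y"
  shows "transpose B *v (gam + beta *s (A *v x1 + B *v y1)) + Ly *\<^sub>R (y1 - y0) + (Dgy + Dhk) = 0"
proof -
  define D where "D = transpose B *v (gam + beta *s (A *v x1 + B *v y1)) + Ly *\<^sub>R (y1 - y0) + (Dgy + Dhk)"
  let ?H = "hbar A B beta Ly x1 y0 gam Dgy Dhk"
  have "?H (y1 + v) = ?H y1 + D \<bullet> v + Ly / 2 * (norm v)\<^sup>2 + beta / 2 * (norm (B *v v))\<^sup>2" for v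
    unfolding D_def by (rule hbar_expansion)
  then have "?H (y1 + t *\<^sub>R D) = ?H y1 + D \<bullet> (t *\<^sub>R D) + Ly / 2 * (norm (t *\<^sub>R D))\<^sup>2
      + beta / 2 * (norm (B *v (t *\<^sub>R D)))\<^sup>2" for t .
  also have "\<dots> t = ?H y1 + t * (norm D)\<^sup>2
      + t\<^sup>2 * (Ly / 2 * (norm D)\<^sup>2 + beta / 2 * (norm (B *v D))\<^sup>2)" for t
    by (simp add: matrix_vector_mult_scaleR power_mult_distrib dot_square_norm algebra_simps)
  finally have "?H (y1 + t *\<^sub>R D) = ?H y1 + t * (norm D)\<^sup>2
      + t\<^sup>2 * (Ly / 2 * (norm D)\<^sup>2 + beta / 2 * (norm (B *v D))\<^sup>2)" for t .
  then have "0 \<le> t * (norm D)\<^sup>2 + t\<^sup>2 * (Ly / 2 * (norm D)\<^sup>2 + beta / 2 * (norm (B *v D))\<^sup>2)" for t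
    using min[of "y1 + t *\<^sub>R D"] by simp
  then have "(norm D)\<^sup>2 = 0" using quadratic_nonneg_imp_linear_coeff_eq_0 by fastforce
  then show ?thesis by (simp add: D_def)
qed

lemma aug_lagr_y_update_decrease:
  assumes min: "\<And>y. hbar A B beta Ly x1 y0 gam Dgy Dhk y1 \<le> hbar A B beta Ly x1 y0 gam Dgy Dhk y"
    and taylor: "g (x1, y1) + h y1 - (g (x1, y0) + h y0) - (Dgy + Dhk) \<bullet> (y1 - y0)
      \<le> Lw * (norm (y1 - y0))\<^sup>2"
    and B_bound: "\<sigma> * (norm (y1 - y0))\<^sup>2 \<le> (norm (B *v (y1 - y0)))\<^sup>2" and "beta \<ge> 0"
  shows "aug_lagr g f h A B beta x1 y1 gam
    \<le> aug_lagr g f h A B beta x1 y0 gam - (Ly - Lw + beta * \<sigma> / 2) * (norm (y1 - y0))\<^sup>2"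
proof -
  define d where "d = y1 - y0"
  let ?H = "hbar A B beta Ly x1 y0 gam Dgy Dhk"
  have aug: "aug_lagr g f h A B beta x1 y gam = ?H y - Ly / 2 * (norm (y - y0))\<^sup>2 - (y - y0) \<bullet> (Dgy + Dhk)
      + g (x1, y) + h y + f x1 + gam \<bullet> (A *v x1)" for y
    unfolding aug_lagr_def hbar_def by (simp add: inner_add_right)
  have "B *v (- d) = - (B *v d)"
    by (simp add: matrix_vector_mult_def vec_eq_iff sum_negf)
  then have H0: "?H y0 = ?H y1 + Ly / 2 * (norm d)\<^sup>2 + beta / 2 * (norm (B *v d))\<^sup>2"
    using hbar_expansion[of A B beta Ly x1 y0 gam Dgy Dhk y1 "- d"]
    unfolding hbar_argmin_optimality[OF min] by (simp add: d_def norm_minus_commute)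
  have "beta * \<sigma> / 2 * (norm d)\<^sup>2 \<le> beta / 2 * (norm (B *v d))\<^sup>2"
    using mult_left_mono[OF B_bound, of "beta / 2"] \<open>beta \<ge> 0\<close> by (simp add: d_def)
  then show ?thesis
    using aug[of y1] aug[of y0] H0 taylor by (simp add: d_def[symmetric] inner_commute algebra_simps)
qed

lemma aug_lagr_dual_update:
  "aug_lagr g f h A B beta x y (gam + beta *s (A *v x + B *v y))
   = aug_lagr g f h A B beta x y gam + beta * (norm (A *v x + B *v y))\<^sup>2"
  by (simp add: aug_lagr_def inner_add_left scalar_mult_eq_scaleR power2_norm_eq_inner)

section \<open>Convergence\<close>

locale linearized_admm =
  fixes g :: "(real^'p) \<times> (real^'q) \<Rightarrow> real"
    and Dg :: "(real^'p) \<times> (real^'q) \<Rightarrow> (real^'p) \<times> (real^'q)"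
    and f :: "real^'p \<Rightarrow> real"
    and h :: "real^'q \<Rightarrow> real" and Dh :: "real^'q \<Rightarrow> real^'q"
    and A :: "real^'p^'n" and B :: "real^'q^'n"
    and Lg Lh Lx Ly beta LA lamB :: real
    and xs :: "nat \<Rightarrow> real^'p" and ys :: "nat \<Rightarrow> real^'q" and gs :: "nat \<Rightarrow> real^'n"
  assumes g_grad: "\<And>u. (g has_derivative (\<lambda>d. Dg u \<bullet> d)) (at u)"
    and g_lip: "\<And>u u'. norm (Dg u - Dg u') \<le> Lg * norm (u - u')"
    and h_grad: "\<And>y. (h has_derivative (\<lambda>d. Dh y \<bullet> d)) (at y)"
    and h_lip: "\<And>y y'. norm (Dh y - Dh y') \<le> Lh * norm (y - y')"
    and Lg_nonneg: "Lg \<ge> 0" and Lh_nonneg: "Lh \<ge> 0"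
    and lower_bdd: "\<exists>c. \<forall>x y. A *v x + B *v y = 0 \<longrightarrow> c \<le> g (x, y) + f x + h y"
    and B_rank: "rank B = CARD('q)"
    and img: "range (\<lambda>x. A *v x) \<subseteq> range (\<lambda>y. B *v y)"
    and LA_max: "\<And>mu. is_eigenvalue (transpose A ** A) mu \<Longrightarrow> mu \<le> LA"
    and lamB_eig: "is_eigenvalue (transpose B ** B) lamB"
    and lamB_min: "\<And>mu. is_eigenvalue (transpose B ** B) mu \<Longrightarrow> lamB \<le> mu"
    and beta_pos: "beta > 0"
    and Lx_cond: "Lx \<ge> Lg + beta * LA + 6 * (Lg + Lh)\<^sup>2 + 1"
    and Ly_cond: "Ly \<ge> (Lg + Lh) + (Lg + Lh)\<^sup>2 + 3"
    and beta_cond: "beta \<ge> Max {((Lg + Lh) + Ly + 2) / lamB,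
                                3 * ((Lg + Lh)\<^sup>2 + Ly\<^sup>2) / (lamB * ((Ly + (Lg + Lh)\<^sup>2) / 2)),
                                3 * Ly\<^sup>2 / lamB}"
    and x_step: "\<And>k x. fbar f A B beta Lx (xs k) (ys k) (gs k) (fst (Dg (xs k, ys k))) (xs (Suc k))
                      \<le> fbar f A B beta Lx (xs k) (ys k) (gs k) (fst (Dg (xs k, ys k))) x"
    and y_step: "\<And>k y. hbar A B beta Ly (xs (Suc k)) (ys k) (gs k)
                        (snd (Dg (xs (Suc k), ys k))) (Dh (ys k)) (ys (Suc k))
                      \<le> hbar A B beta Ly (xs (Suc k)) (ys k) (gs k)
                        (snd (Dg (xs (Suc k), ys k))) (Dh (ys k)) y"
    and gamma_step: "\<And>k. gs (Suc k) = gs k + beta *s (A *v xs (Suc k) + B *v ys (Suc k))"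
begin

abbreviation Lw :: real where "Lw \<equiv> Lg + Lh"

definition Cm :: real where "Cm = (Ly + Lw\<^sup>2) / 2"

definition grad_y :: "real^'p \<Rightarrow> real^'q \<Rightarrow> real^'q" where
  "grad_y x y = snd (Dg (x, y)) + Dh y"

definition lagr :: "nat \<Rightarrow> real" where
  "lagr k = aug_lagr g f h A B beta (xs k) (ys k) (gs k)"

definition step_x :: "nat \<Rightarrow> real" where "step_x k = norm (xs (Suc k) - xs k)"

definition step_y :: "nat \<Rightarrow> real" where "step_y k = norm (ys (Suc k) - ys k)"

definition step_gam :: "nat \<Rightarrow> real" where "step_gam k = norm (gs (Suc k) - gs k)"

definition lyap :: "nat \<Rightarrow> real" where "lyap k = lagr (Suc k) + Cm * (step_y k)\<^sup>2"

lemma Lw_nonneg: "Lw \<ge> 0"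
  using Lg_nonneg Lh_nonneg by simp

lemma lamB_pos: "lamB > 0"
  by (rule full_rank_eigenvalue_pos[OF B_rank lamB_eig])

lemma Ly_ge: "Ly \<ge> Lw + 3"
  by (rule order_trans[OF _ Ly_cond]) simp

lemma Ly_pos: "Ly > 0"
  using Ly_ge Lw_nonneg by linarith

lemma Cm_pos: "Cm > 0"
  using Ly_pos by (simp add: Cm_def add_pos_nonneg)

lemma beta_lamB_bounds:
  shows "beta * lamB \<ge> Lw + Ly + 2" and "beta * lamB * Cm \<ge> 3 * (Lw\<^sup>2 + Ly\<^sup>2)"
    and "beta * lamB \<ge> 3 * Ly\<^sup>2"
proof -
  let ?S = "{(Lw + Ly + 2) / lamB, 3 * (Lw\<^sup>2 + Ly\<^sup>2) / (lamB * Cm), 3 * Ly\<^sup>2 / lamB}"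
  have le_beta: "x \<le> beta" if "x \<in> ?S" for x
  proof -
    have "x \<le> Max ?S" using that by (intro Max_ge) auto
    also have "Max ?S \<le> beta" using beta_cond by (simp only: Cm_def)
    finally show ?thesis .
  qed
  have "(Lw + Ly + 2) / lamB \<le> beta" by (rule le_beta) simp
  then show "beta * lamB \<ge> Lw + Ly + 2"
    using lamB_pos by (simp add: pos_divide_le_eq)
  have "3 * Ly\<^sup>2 / lamB \<le> beta" by (rule le_beta) simp
  then show "beta * lamB \<ge> 3 * Ly\<^sup>2"
    using lamB_pos by (simp add: pos_divide_le_eq)
  have "3 * (Lw\<^sup>2 + Ly\<^sup>2) / (lamB * Cm) \<le> beta" by (rule le_beta) simp
  then have "3 * (Lw\<^sup>2 + Ly\<^sup>2) \<le> beta * (lamB * Cm)"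
    by (rule pos_divide_le_eq[OF mult_pos_pos[OF lamB_pos Cm_pos], THEN iffD1])
  then show "beta * lamB * Cm \<ge> 3 * (Lw\<^sup>2 + Ly\<^sup>2)"
    by (simp only: mult.assoc)
qed

lemma norm_A_mult_le: "(norm (A *v v))\<^sup>2 \<le> LA * (norm v)\<^sup>2"
  by (rule norm_mult_le_max_eigenvalue[OF LA_max])

lemma norm_B_mult_ge: "lamB * (norm v)\<^sup>2 \<le> (norm (B *v v))\<^sup>2"
  by (rule min_eigenvalue_le_norm_mult[OF lamB_min])

lemma g_taylor_bound_x: "g (x + d, y) - g (x, y) - fst (Dg (x, y)) \<bullet> d \<le> Lg * (norm d)\<^sup>2"
  using lipschitz_gradient_taylor_bound[OF g_grad g_lip Lg_nonneg, of "(x, y)" "(d, 0)"]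
  by (simp add: inner_Pair_0)

lemma grad_y_taylor_bound:
  "\<bar>g (x, y + d) + h (y + d) - (g (x, y) + h y) - grad_y x y \<bullet> d\<bar> \<le> Lw * (norm d)\<^sup>2"
proof -
  have "\<bar>g (x, y + d) - g (x, y) - snd (Dg (x, y)) \<bullet> d\<bar> \<le> Lg * (norm d)\<^sup>2"
    using lipschitz_gradient_taylor_bound[OF g_grad g_lip Lg_nonneg, of "(x, y)" "(0, d)"]
    by (simp add: inner_Pair_0)
  moreover have "\<bar>h (y + d) - h y - Dh y \<bullet> d\<bar> \<le> Lh * (norm d)\<^sup>2"
    by (rule lipschitz_gradient_taylor_bound[OF h_grad h_lip Lh_nonneg])
  ultimately show ?thesis
    by (simp add: grad_y_def inner_add_left distrib_right)
qed

lemma grad_y_lipschitz: "norm (grad_y x y - grad_y x' y') \<le> Lw * norm ((x, y) - (x', y'))"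
proof -
  have "norm (snd (Dg (x, y)) - snd (Dg (x', y'))) \<le> Lg * norm ((x, y) - (x', y'))"
    using norm_snd_diff_le[of "Dg (x, y)" "Dg (x', y')"] g_lip[of "(x, y)" "(x', y')"] by linarith
  moreover have "norm (Dh y - Dh y') \<le> Lh * norm ((x, y) - (x', y'))"
    using h_lip[of y y'] mult_left_mono[OF norm_snd_diff_le[of "(x, y)" "(x', y')"] Lh_nonneg]
    by simp
  moreover have "grad_y x y - grad_y x' y'
      = (snd (Dg (x, y)) - snd (Dg (x', y'))) + (Dh y - Dh y')"
    by (simp add: grad_y_def)
  then have "norm (grad_y x y - grad_y x' y')
      \<le> norm (snd (Dg (x, y)) - snd (Dg (x', y'))) + norm (Dh y - Dh y')"
    by (metis norm_triangle_ineq)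
  ultimately show ?thesis
    unfolding distrib_right by linarith
qed

lemma x_update_decrease:
  "aug_lagr g f h A B beta (xs (Suc k)) (ys k) (gs k) \<le> lagr k - Lw\<^sup>2 * (step_x k)\<^sup>2 - (step_x k)\<^sup>2 / 4"
proof -
  have "Lw\<^sup>2 + 1 / 4 \<le> Lx / 2 - Lg - beta * LA / 2"
    using Lx_cond Lh_nonneg zero_le_power2[of "2 * Lw - 1 / 4"] by (simp add: power2_eq_square algebra_simps)
  then have "(Lw\<^sup>2 + 1 / 4) * (step_x k)\<^sup>2 \<le> (Lx / 2 - Lg - beta * LA / 2) * (step_x k)\<^sup>2"
    by (simp add: mult_right_mono)
  moreover have "(Lw\<^sup>2 + 1 / 4) * (step_x k)\<^sup>2 = Lw\<^sup>2 * (step_x k)\<^sup>2 + (step_x k)\<^sup>2 / 4"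
    by (simp add: algebra_simps)
  moreover have "g (xs (Suc k), ys k) - g (xs k, ys k) - fst (Dg (xs k, ys k)) \<bullet> (xs (Suc k) - xs k)
      \<le> Lg * (norm (xs (Suc k) - xs k))\<^sup>2"
    using g_taylor_bound_x[of "xs k" "xs (Suc k) - xs k" "ys k"] by simp
  then have "aug_lagr g f h A B beta (xs (Suc k)) (ys k) (gs k)
      \<le> lagr k - (Lx / 2 - Lg - beta * LA / 2) * (step_x k)\<^sup>2"
    using aug_lagr_x_update_decrease[OF x_step _ norm_A_mult_le less_imp_le[OF beta_pos]]
    unfolding lagr_def step_x_def by simp
  ultimately show ?thesis by linarith
qed

lemma y_update_optimality:
  "transpose B *v gs (Suc k) = - (Ly *\<^sub>R (ys (Suc k) - ys k) + grad_y (xs (Suc k)) (ys k))"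
proof -
  have "transpose B *v gs (Suc k) + Ly *\<^sub>R (ys (Suc k) - ys k) + grad_y (xs (Suc k)) (ys k) = 0"
    using hbar_argmin_optimality[OF y_step[of k]] unfolding gamma_step[symmetric] grad_y_def .
  then show ?thesis by (simp only: eq_neg_iff_add_eq_0 add.assoc)
qed

lemma y_update_decrease:
  "aug_lagr g f h A B beta (xs (Suc k)) (ys (Suc k)) (gs k)
    \<le> aug_lagr g f h A B beta (xs (Suc k)) (ys k) (gs k) - Cm * (step_y k)\<^sup>2 - 2 * (step_y k)\<^sup>2"
proof -
  have "Cm + 2 \<le> Ly - Lw + beta * lamB / 2"
    using beta_lamB_bounds(1) Ly_cond Ly_ge Lw_nonneg unfolding Cm_def add_divide_distrib by linarith
  then have "(Cm + 2) * (step_y k)\<^sup>2 \<le> (Ly - Lw + beta * lamB / 2) * (step_y k)\<^sup>2"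
    by (simp add: mult_right_mono)
  moreover have "(Cm + 2) * (step_y k)\<^sup>2 = Cm * (step_y k)\<^sup>2 + 2 * (step_y k)\<^sup>2"
    by (simp add: algebra_simps)
  moreover have "g (xs (Suc k), ys (Suc k)) + h (ys (Suc k)) - (g (xs (Suc k), ys k) + h (ys k))
      - grad_y (xs (Suc k)) (ys k) \<bullet> (ys (Suc k) - ys k) \<le> Lw * (step_y k)\<^sup>2"
    using grad_y_taylor_bound[of "xs (Suc k)" "ys k" "ys (Suc k) - ys k"] by (simp add: step_y_def)
  then have "aug_lagr g f h A B beta (xs (Suc k)) (ys (Suc k)) (gs k)
      \<le> aug_lagr g f h A B beta (xs (Suc k)) (ys k) (gs k) - (Ly - Lw + beta * lamB / 2) * (step_y k)\<^sup>2"
    using aug_lagr_y_update_decrease[OF y_step _ norm_B_mult_ge less_imp_le[OF beta_pos]]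
    unfolding step_y_def grad_y_def by simp
  ultimately show ?thesis by linarith
qed

lemma lagr_Suc_eq:
  "lagr (Suc k) = aug_lagr g f h A B beta (xs (Suc k)) (ys (Suc k)) (gs k) + (step_gam k)\<^sup>2 / beta"
proof -
  have "(step_gam k)\<^sup>2 / beta = beta * (norm (A *v xs (Suc k) + B *v ys (Suc k)))\<^sup>2"
    using beta_pos by (simp add: step_gam_def gamma_step scalar_mult_eq_scaleR power_mult_distrib
      power2_eq_square)
  then show ?thesis unfolding lagr_def gamma_step aug_lagr_dual_update by simp
qed

lemma dual_step_in_range: "\<exists>u. gs (Suc k) - gs k = B *v u"
proof -
  obtain z where "A *v xs (Suc k) = B *v z" using img by blast
  then have "gs (Suc k) - gs k = B *v (beta *\<^sub>R (z + ys (Suc k)))"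
    by (simp add: gamma_step scalar_mult_eq_scaleR algebra_simps)
  then show ?thesis by blast
qed

lemma dual_step_bound:
  "lamB * (step_gam (Suc k))\<^sup>2
    \<le> 3 * (Ly\<^sup>2 * (step_y (Suc k))\<^sup>2 + Ly\<^sup>2 * (step_y k)\<^sup>2 + Lw\<^sup>2 * ((step_x (Suc k))\<^sup>2 + (step_y k)\<^sup>2))"
proof -
  define dx where "dx = xs (Suc (Suc k)) - xs (Suc k)"
  define dy0 where "dy0 = ys (Suc k) - ys k"
  define dy1 where "dy1 = ys (Suc (Suc k)) - ys (Suc k)"
  define N where "N = norm (dx, dy0)"
  let ?\<Delta> = "gs (Suc (Suc k)) - gs (Suc k)"
  obtain u where u: "?\<Delta> = B *v u" using dual_step_in_range by blast
  have "lamB * (step_gam (Suc k))\<^sup>2 \<le> (norm (transpose B *v ?\<Delta>))\<^sup>2"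
    using min_eigenvalue_le_norm_transpose_mult[OF norm_B_mult_ge, of u] by (simp add: step_gam_def u)
  also have "transpose B *v ?\<Delta>
      = - (Ly *\<^sub>R dy1) + Ly *\<^sub>R dy0 - (grad_y (xs (Suc (Suc k))) (ys (Suc k)) - grad_y (xs (Suc k)) (ys k))"
    unfolding matrix_vector_mult_diff_distrib y_update_optimality dy0_def dy1_def by (simp add: algebra_simps)
  also have "(norm \<dots>)\<^sup>2 \<le> (Ly * norm dy1 + Ly * norm dy0 + Lw * N)\<^sup>2"
  proof (rule power_mono)
    have "norm (grad_y (xs (Suc (Suc k))) (ys (Suc k)) - grad_y (xs (Suc k)) (ys k)) \<le> Lw * N"
      using grad_y_lipschitz by (simp add: N_def dx_def dy0_def)
    moreover have "norm (- (Ly *\<^sub>R dy1) + Ly *\<^sub>R dy0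
        - (grad_y (xs (Suc (Suc k))) (ys (Suc k)) - grad_y (xs (Suc k)) (ys k)))
      \<le> norm (- (Ly *\<^sub>R dy1)) + norm (Ly *\<^sub>R dy0)
        + norm (grad_y (xs (Suc (Suc k))) (ys (Suc k)) - grad_y (xs (Suc k)) (ys k))"
      by (rule order_trans[OF norm_triangle_ineq4 add_right_mono[OF norm_triangle_ineq]])
    ultimately show "norm (- (Ly *\<^sub>R dy1) + Ly *\<^sub>R dy0
        - (grad_y (xs (Suc (Suc k))) (ys (Suc k)) - grad_y (xs (Suc k)) (ys k)))
      \<le> Ly * norm dy1 + Ly * norm dy0 + Lw * N"
      using Ly_pos by simp
  qed simp
  also have "\<dots> \<le> 3 * ((Ly * norm dy1)\<^sup>2 + (Ly * norm dy0)\<^sup>2 + (Lw * N)\<^sup>2)"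
    by (rule power2_sum3_le)
  also have "\<dots> = 3 * (Ly\<^sup>2 * (step_y (Suc k))\<^sup>2 + Ly\<^sup>2 * (step_y k)\<^sup>2 + Lw\<^sup>2 * ((step_x (Suc k))\<^sup>2 + (step_y k)\<^sup>2))"
    by (simp add: N_def norm_Pair power_mult_distrib step_x_def step_y_def dx_def dy0_def dy1_def)
  finally show ?thesis .
qed

text \<open>This is where the three lower bounds on \<open>beta\<close> enter: they make the increase of
  the augmented Lagrangian caused by the dual step small compared to the primal decrease.\<close>
lemma dual_increase_absorbed:
  "(step_gam (Suc k))\<^sup>2 / beta \<le> (step_y (Suc k))\<^sup>2 + Cm * (step_y k)\<^sup>2 + Lw\<^sup>2 * (step_x (Suc k))\<^sup>2"
proof -
  have "beta * lamB \<ge> 3"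
    using beta_lamB_bounds(1) Ly_ge Lw_nonneg by linarith
  then have "3 * (Lw\<^sup>2 * (step_x (Suc k))\<^sup>2) \<le> beta * lamB * (Lw\<^sup>2 * (step_x (Suc k))\<^sup>2)"
    by (rule mult_right_mono) simp
  moreover have "3 * Ly\<^sup>2 * (step_y (Suc k))\<^sup>2 \<le> beta * lamB * (step_y (Suc k))\<^sup>2"
    by (rule mult_right_mono[OF beta_lamB_bounds(3) zero_le_power2])
  moreover have "3 * (Lw\<^sup>2 + Ly\<^sup>2) * (step_y k)\<^sup>2 \<le> beta * lamB * Cm * (step_y k)\<^sup>2"
    by (rule mult_right_mono[OF beta_lamB_bounds(2) zero_le_power2])
  moreover have "3 * (Ly\<^sup>2 * (step_y (Suc k))\<^sup>2 + Ly\<^sup>2 * (step_y k)\<^sup>2 + Lw\<^sup>2 * ((step_x (Suc k))\<^sup>2 + (step_y k)\<^sup>2))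
      = 3 * Ly\<^sup>2 * (step_y (Suc k))\<^sup>2 + 3 * (Lw\<^sup>2 + Ly\<^sup>2) * (step_y k)\<^sup>2
        + 3 * (Lw\<^sup>2 * (step_x (Suc k))\<^sup>2)"
    by (simp add: algebra_simps)
  moreover have "beta * lamB * ((step_y (Suc k))\<^sup>2 + Cm * (step_y k)\<^sup>2 + Lw\<^sup>2 * (step_x (Suc k))\<^sup>2)
      = beta * lamB * (step_y (Suc k))\<^sup>2 + beta * lamB * Cm * (step_y k)\<^sup>2
        + beta * lamB * (Lw\<^sup>2 * (step_x (Suc k))\<^sup>2)"
    by (simp add: algebra_simps)
  ultimately have "lamB * (step_gam (Suc k))\<^sup>2
      \<le> beta * lamB * ((step_y (Suc k))\<^sup>2 + Cm * (step_y k)\<^sup>2 + Lw\<^sup>2 * (step_x (Suc k))\<^sup>2)"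
    using dual_step_bound[of k] by linarith
  then show ?thesis
    using beta_pos lamB_pos by (simp add: pos_divide_le_eq mult.commute mult.left_commute)
qed

lemma lyap_decrease: "lyap (Suc k) + (step_x (Suc k))\<^sup>2 / 4 + (step_y (Suc k))\<^sup>2 \<le> lyap k"
  using x_update_decrease[of "Suc k"] y_update_decrease[of "Suc k"] lagr_Suc_eq[of "Suc k"]
    dual_increase_absorbed[of k]
  unfolding lyap_def by linarith

lemma grad_y_residual_bound:
  "norm (grad_y (xs (Suc k)) (ys (Suc k)) + transpose B *v gs (Suc k)) \<le> (Lw + Ly) * step_y k"
proof -
  have "grad_y (xs (Suc k)) (ys (Suc k)) + transpose B *v gs (Suc k)
      = (grad_y (xs (Suc k)) (ys (Suc k)) - grad_y (xs (Suc k)) (ys k)) - Ly *\<^sub>R (ys (Suc k) - ys k)"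
    unfolding y_update_optimality by (simp add: algebra_simps)
  also have "norm \<dots> \<le> Lw * step_y k + Ly * step_y k"
    using grad_y_lipschitz[of "xs (Suc k)" "ys (Suc k)" "xs (Suc k)" "ys k"] Ly_pos
      norm_triangle_ineq4[of "grad_y (xs (Suc k)) (ys (Suc k)) - grad_y (xs (Suc k)) (ys k)"
        "Ly *\<^sub>R (ys (Suc k) - ys k)"]
    by (simp add: step_y_def norm_Pair)
  finally show ?thesis by (simp add: distrib_right)
qed

lemma lyap_quadratic_form_nonneg: "0 \<le> Cm * s\<^sup>2 - (Lw + Ly) * s * t + (beta * lamB / 2 - Lw) * t\<^sup>2"
proof (rule quadratic_form_nonneg)
  show "beta * lamB / 2 - Lw > 0" using beta_lamB_bounds(1) Ly_ge Lw_nonneg by linarith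
  have "Lw\<^sup>2 \<le> Ly" using Ly_cond Lw_nonneg by linarith
  then have "Lw * Lw\<^sup>2 \<le> Lw * Ly" by (rule mult_left_mono[OF _ Lw_nonneg])
  moreover have "3 * (Lw\<^sup>2 + Ly\<^sup>2) = 3 * Lw\<^sup>2 + 3 * Ly\<^sup>2" by simp
  moreover have "0 \<le> (Lw - Ly)\<^sup>2" by simp
  moreover have "(Lw - Ly)\<^sup>2 = Lw\<^sup>2 - 2 * (Lw * Ly) + Ly\<^sup>2" by (simp add: power2_diff)
  moreover have "(Lw + Ly)\<^sup>2 = Lw\<^sup>2 + 2 * (Lw * Ly) + Ly\<^sup>2" by (simp add: power2_sum)
  moreover have "4 * Cm * (beta * lamB / 2 - Lw) = 2 * (beta * lamB * Cm) - 2 * (Lw * Ly) - 2 * (Lw * Lw\<^sup>2)"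
    by (simp add: Cm_def field_simps)
  ultimately show "(Lw + Ly)\<^sup>2 \<le> 4 * Cm * (beta * lamB / 2 - Lw)"
    using beta_lamB_bounds(2) zero_le_power2[of Lw] zero_le_power2[of Ly] by linarith
qed

text \<open>With \<open>e = y\<^sup>k\<^sup>+\<^sup>1 - z\<close> the dual term of \<open>lagr (Suc k)\<close> is \<open>(B\<^sup>T\<gamma>\<^sup>k\<^sup>+\<^sup>1) \<bullet> e\<close>; the optimality
  condition of the y-step turns it into a gradient residual of size \<open>O(|y\<^sup>k\<^sup>+\<^sup>1 - y\<^sup>k|)\<close>, and the
  remaining quadratic form in \<open>|y\<^sup>k\<^sup>+\<^sup>1 - y\<^sup>k|\<close> and \<open>|e|\<close> is nonnegative.\<close>
lemma objective_le_lyap: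
  assumes feasible: "A *v xs (Suc k) + B *v z = 0"
  shows "g (xs (Suc k), z) + f (xs (Suc k)) + h z \<le> lyap k"
proof -
  define x where "x = xs (Suc k)"
  define y where "y = ys (Suc k)"
  define e where "e = y - z"
  define R where "R = grad_y x y + transpose B *v gs (Suc k)"
  have res: "A *v x + B *v y = B *v e"
    using feasible by (simp add: x_def e_def algebra_simps eq_neg_iff_add_eq_0)
  have lagr_eq: "lagr (Suc k) = g (x, y) + f x + h y + (transpose B *v gs (Suc k)) \<bullet> e
      + beta / 2 * (norm (B *v e))\<^sup>2"
    by (simp add: lagr_def aug_lagr_def x_def[symmetric] y_def[symmetric] res dot_lmul_matrix)
  have "y + - e = z" by (simp add: e_def)
  then have "g (x, z) + h z \<le> g (x, y) + h y - grad_y x y \<bullet> e + Lw * (norm e)\<^sup>2"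
    using grad_y_taylor_bound[of x y "- e"] by (simp add: abs_le_iff)
  moreover have "- ((Lw + Ly) * step_y k * norm e) \<le> R \<bullet> e"
    using Cauchy_Schwarz_ineq2[of R e] mult_right_mono[OF grad_y_residual_bound[of k] norm_ge_zero[of e]]
    by (simp add: R_def x_def y_def abs_le_iff)
  moreover have "beta * lamB / 2 * (norm e)\<^sup>2 \<le> beta / 2 * (norm (B *v e))\<^sup>2"
    using mult_left_mono[OF norm_B_mult_ge[of e], of "beta / 2"] beta_pos by simp
  moreover have "0 \<le> Cm * (step_y k)\<^sup>2 - (Lw + Ly) * step_y k * norm e + (beta * lamB / 2 - Lw) * (norm e)\<^sup>2"
    by (rule lyap_quadratic_form_nonneg)
  ultimately show ?thesis
    unfolding lyap_def lagr_eq x_def[symmetric] by (simp add: R_def inner_add_left algebra_simps)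
qed

lemma lyap_bounded_below: "\<exists>c. \<forall>k. c \<le> lyap k"
proof -
  obtain c where c: "\<And>x y. A *v x + B *v y = 0 \<Longrightarrow> c \<le> g (x, y) + f x + h y"
    using lower_bdd by blast
  have "c \<le> lyap k" for k
  proof -
    obtain w where "A *v xs (Suc k) = B *v w" using img by blast
    then have "A *v xs (Suc k) + B *v (- w) = 0"
      by (simp add: matrix_vector_mult_def vec_eq_iff sum_negf)
    then show ?thesis using c objective_le_lyap by (meson order_trans)
  qed
  then show ?thesis by blast
qed

lemma lyap_convergent: "convergent lyap"
proof -
  have "lyap (Suc k) \<le> lyap k" for k
    using lyap_decrease[of k] zero_le_power2[of "step_x (Suc k)"] zero_le_power2[of "step_y (Suc k)"]
    by linarith
  then have "decseq lyap" by (simp add: decseq_Suc_iff)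
  moreover obtain c where "\<forall>k. c \<le> lyap k" using lyap_bounded_below by blast
  ultimately show ?thesis
    by (metis convergent_def decseq_convergent)
qed

lemma step_x_tendsto_0: "step_x \<longlonglongrightarrow> 0"
proof -
  have "(\<lambda>k. (step_x k)\<^sup>2) \<longlonglongrightarrow> 0"
  proof (rule decrement_dominated_tendsto_0[OF lyap_convergent, where C = 4])
    show "(step_x (Suc k))\<^sup>2 \<le> 4 * lyap k - 4 * lyap (Suc k)" for k
      using lyap_decrease[of k] zero_le_power2[of "step_y (Suc k)"] by linarith
  qed simp
  from tendsto_real_sqrt[OF this] show ?thesis by (simp add: step_x_def[abs_def])
qed

lemma step_y_tendsto_0: "step_y \<longlonglongrightarrow> 0"
proof -
  have "(\<lambda>k. (step_y k)\<^sup>2) \<longlonglongrightarrow> 0"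
  proof (rule decrement_dominated_tendsto_0[OF lyap_convergent, where C = 1])
    show "(step_y (Suc k))\<^sup>2 \<le> 1 * lyap k - 1 * lyap (Suc k)" for k
      using lyap_decrease[of k] zero_le_power2[of "step_x (Suc k)"] by linarith
  qed simp
  from tendsto_real_sqrt[OF this] show ?thesis by (simp add: step_y_def[abs_def])
qed

lemma step_gam_tendsto_0: "step_gam \<longlonglongrightarrow> 0"
proof -
  let ?b = "\<lambda>k. 3 * (Ly\<^sup>2 * (step_y (Suc k))\<^sup>2 + Ly\<^sup>2 * (step_y k)\<^sup>2
    + Lw\<^sup>2 * ((step_x (Suc k))\<^sup>2 + (step_y k)\<^sup>2)) / lamB"
  have "?b \<longlonglongrightarrow> 0"
    using step_y_tendsto_0 LIMSEQ_Suc[OF step_x_tendsto_0] LIMSEQ_Suc[OF step_y_tendsto_0] lamB_pos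
    by (auto intro!: tendsto_eq_intros)
  moreover have "norm ((step_gam (Suc k))\<^sup>2) \<le> ?b k" for k
    using dual_step_bound[of k] lamB_pos by (simp add: pos_le_divide_eq mult.commute)
  then have "\<forall>\<^sub>F k in sequentially. norm ((step_gam (Suc k))\<^sup>2) \<le> ?b k"
    by (simp add: always_eventually)
  ultimately have "(\<lambda>k. (step_gam (Suc k))\<^sup>2) \<longlonglongrightarrow> 0"
    by (rule Lim_null_comparison[rotated])
  from tendsto_real_sqrt[OF LIMSEQ_imp_Suc[OF this]] show ?thesis by (simp add: step_gam_def[abs_def])
qed

lemma lagr_convergent: "convergent lagr"
proof -
  obtain l where "lyap \<longlonglongrightarrow> l" using lyap_convergent by (auto simp: convergent_def)
  then have "(\<lambda>k. lyap k - Cm * (step_y k)\<^sup>2) \<longlonglongrightarrow> l"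
    using step_y_tendsto_0 by (auto intro!: tendsto_eq_intros)
  then have "(\<lambda>k. lagr (Suc k)) \<longlonglongrightarrow> l" by (simp add: lyap_def)
  then have "convergent (\<lambda>k. lagr (Suc k))" by (auto simp: convergent_def)
  then show ?thesis by (simp add: convergent_Suc_iff)
qed

end


theorem theorem1:
  fixes g :: "(real^'p) \<times> (real^'q) \<Rightarrow> real"
    and Dg :: "(real^'p) \<times> (real^'q) \<Rightarrow> (real^'p) \<times> (real^'q)"
    and f :: "real^'p \<Rightarrow> real"
    and h :: "real^'q \<Rightarrow> real" and Dh :: "real^'q \<Rightarrow> real^'q"
    and A :: "real^'p^'n" and B :: "real^'q^'n"
    and Lg Lh Lx Ly beta LA lamB :: real
    and xs :: "nat \<Rightarrow> real^'p" and ys :: "nat \<Rightarrow> real^'q" and gs :: "nat \<Rightarrow> real^'n"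
  assumes g_grad: "\<And>u. (g has_derivative (\<lambda>d. Dg u \<bullet> d)) (at u)"
    and g_lip: "\<And>u u'. norm (Dg u - Dg u') \<le> Lg * norm (u - u')"
    and h_grad: "\<And>y. (h has_derivative (\<lambda>d. Dh y \<bullet> d)) (at y)"
    and h_lip: "\<And>y y'. norm (Dh y - Dh y') \<le> Lh * norm (y - y')"
    and Lg_nonneg: "Lg \<ge> 0" and Lh_nonneg: "Lh \<ge> 0"
    and lower_bdd: "\<exists>c. \<forall>x y. A *v x + B *v y = 0 \<longrightarrow> c \<le> g (x, y) + f x + h y"
    and coercive: "\<And>u v. (\<forall>k. A *v u k + B *v v k = 0) \<Longrightarrow>
                      filterlim (\<lambda>k. norm (v k)) at_top sequentially \<Longrightarrow>
                      filterlim (\<lambda>k. g (u k, v k) + f (u k) + h (v k)) at_top sequentially"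
    and B_rank: "rank B = CARD('q)"
    and img: "range (\<lambda>x. A *v x) \<subseteq> range (\<lambda>y. B *v y)"
    and LA_eig: "is_eigenvalue (transpose A ** A) LA"
    and LA_max: "\<And>mu. is_eigenvalue (transpose A ** A) mu \<Longrightarrow> mu \<le> LA"
    and lamB_eig: "is_eigenvalue (transpose B ** B) lamB"
    and lamB_min: "\<And>mu. is_eigenvalue (transpose B ** B) mu \<Longrightarrow> lamB \<le> mu"
    and pos: "Lx > 0" "Ly > 0" "beta > 0"
    and Lx_cond: "Lx \<ge> Lg + beta * LA + 6 * (Lg + Lh)\<^sup>2 + 1"
    and Ly_cond: "Ly \<ge> (Lg + Lh) + (Lg + Lh)\<^sup>2 + 3"
    and beta_cond: "beta \<ge> Max {((Lg + Lh) + Ly + 2) / lamB,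
                                3 * ((Lg + Lh)\<^sup>2 + Ly\<^sup>2) / (lamB * ((Ly + (Lg + Lh)\<^sup>2) / 2)),
                                3 * Ly\<^sup>2 / lamB}"
    and x_step: "\<And>k x. fbar f A B beta Lx (xs k) (ys k) (gs k) (fst (Dg (xs k, ys k))) (xs (Suc k))
                      \<le> fbar f A B beta Lx (xs k) (ys k) (gs k) (fst (Dg (xs k, ys k))) x"
    and y_step: "\<And>k y. hbar A B beta Ly (xs (Suc k)) (ys k) (gs k)
                        (snd (Dg (xs (Suc k), ys k))) (Dh (ys k)) (ys (Suc k))
                      \<le> hbar A B beta Ly (xs (Suc k)) (ys k) (gs k)
                        (snd (Dg (xs (Suc k), ys k))) (Dh (ys k)) y"
    and gamma_step: "\<And>k. gs (Suc k) = gs k + beta *s (A *v xs (Suc k) + B *v ys (Suc k))"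
  shows "convergent (\<lambda>k. aug_lagr g f h A B beta (xs k) (ys k) (gs k))
         \<and> (\<lambda>k. norm (ys (Suc k) - ys k)) \<longlonglongrightarrow> 0
         \<and> (\<lambda>k. norm (xs (Suc k) - xs k)) \<longlonglongrightarrow> 0
         \<and> (\<lambda>k. norm (gs (Suc k) - gs k)) \<longlonglongrightarrow> 0"
proof -
  interpret linearized_admm g Dg f h Dh A B Lg Lh Lx Ly beta LA lamB xs ys gs
    by (rule linearized_admm.intro) (fact assms)+
  show ?thesis
    using lagr_convergent step_y_tendsto_0 step_x_tendsto_0 step_gam_tendsto_0
    unfolding lagr_def[abs_def] step_x_def[abs_def] step_y_def[abs_def] step_gam_def[abs_def] by simp
qed

end
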